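(* Let $q$ be a power of an odd prime and let $f(X) \in \mathbb{F}_{q^2}[X]$ be a planar polynomial all of whose coefficients belong to the subfield $\mathbb{F}_q$. Then the orthogonal polarity graph $G_f$ satisfies \[ \alpha(G_f) \geq \tfrac{1}{2} q^2 (q-1), \] where $\alpha$ denotes the independence number.
   Context: Let $Q$ be a power of an odd prime. A polynomial $f(X)\in\mathbb{F}_Q[X]$ is planar if for every $a\in\mathbb{F}_Q^*$ the map $x\mapsto f(x+a)-f(x)$ is a bijection of $\mathbb{F}_Q$. For planar $f$, the projective plane $\Pi_f$ has point set $\{(x,y):x,y\in\mathbb{F}_Q\}\cup\{(x):x\in\mathbb{F}_Q\}\cup\{(\infty)\}$ and lines $[a,b]=\{(x,f(x-a)+b):x\in\mathbb{F}_Q\}\cup\{(a)\}$, $[c]=\{(c,y):y\in\mathbb{F}_Q\}\cup\{(\infty)\}$, $[\infty]=\{(c):c\in\mathbb{F}_Q\}\cup\{(\infty)\}$ ($a,b,c\in\mathbb{F}_Q$), with incidence being containment. It has the polarity $\omega$ given by $(\infty)^\omega=[\infty]$, $[\infty]^\omega=(\infty)$, $(c)^\omega=[-c]$, $[c]^\omega=(-c)$, $(x,y)^\omega=[-x,-y]$, $[a,b]^\omega=(-a,-b)$. The graph $G_f$ has as vertices the points of $\Pi_f$, with two distinct points $p_1,p_2$ adjacent iff $p_1$ lies on the line $p_2^\omega$. (In particular distinct $(x_1,y_1),(x_2,y_2)$ are adjacent iff $f(x_1+x_2)=y_1+y_2$.) Here this is applied with $Q=q^2$. *)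

theory Defs
  imports "HOL-Computational_Algebra.Polynomial" "HOL-Computational_Algebra.Primes"
begin

definition planar :: "'a::{field,finite} poly \<Rightarrow> bool" where
  "planar f \<longleftrightarrow> (\<forall>a. a \<noteq> 0 \<longrightarrow> bij (\<lambda>x. poly f (x + a) - poly f x))"

datatype 'a pt = Aff 'a 'a | Dir 'a | PInf
datatype 'a ln = LAB 'a 'a | LV 'a | LInf

fun incident :: "'a::field poly \<Rightarrow> 'a pt \<Rightarrow> 'a ln \<Rightarrow> bool" where
  "incident f (Aff x y) (LAB a b) \<longleftrightarrow> y = poly f (x - a) + b"
| "incident f (Dir c) (LAB a b) \<longleftrightarrow> c = a"
| "incident f PInf (LAB a b) \<longleftrightarrow> False"
| "incident f (Aff x y) (LV c) \<longleftrightarrow> x = c"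
| "incident f (Dir c') (LV c) \<longleftrightarrow> False"
| "incident f PInf (LV c) \<longleftrightarrow> True"
| "incident f (Aff x y) LInf \<longleftrightarrow> False"
| "incident f (Dir c) LInf \<longleftrightarrow> True"
| "incident f PInf LInf \<longleftrightarrow> True"

fun polar :: "'a::field pt \<Rightarrow> 'a ln" where
  "polar PInf = LInf"
| "polar (Dir c) = LV (- c)"
| "polar (Aff x y) = LAB (- x) (- y)"

definition adj :: "'a::field poly \<Rightarrow> 'a pt \<Rightarrow> 'a pt \<Rightarrow> bool" where
  "adj f p1 p2 \<longleftrightarrow> p1 \<noteq> p2 \<and> incident f p1 (polar p2)"

definition indep_set :: "'a::field poly \<Rightarrow> 'a pt set \<Rightarrow> bool" where
  "indep_set f S \<longleftrightarrow> (\<forall>p1\<in>S. \<forall>p2\<in>S. \<not> adj f p1 p2)"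

definition independence_number :: "'a::field poly \<Rightarrow> nat" where
  "independence_number f = Max {card S | S. indep_set f S}"

end

theory Submission
  imports Defs
begin

text \<open>
  Let \<open>K = \<bbbF>\<^sub>q\<close> be the fixed field of \<open>x \<mapsto> x\<^sup>q\<close> and \<open>\<psi> y = y\<^sup>q - y\<close>.  Then \<open>\<psi>\<close> is additive
  with kernel \<open>K\<close>, so \<open>y\<^sub>1 + y\<^sub>2 \<in> K\<close> iff \<open>\<psi> y\<^sub>2 = - \<psi> y\<^sub>1\<close>.  In odd characteristic the nonzero
  values of \<open>\<psi>\<close> come in pairs \<open>{z, -z}\<close>; taking for \<open>Y\<close> the preimage of one member of each
  pair gives \<open>|Y| = (q\<^sup>2 - q)/2\<close> and \<open>y\<^sub>1 + y\<^sub>2 \<notin> K\<close> for all \<open>y\<^sub>1, y\<^sub>2 \<in> Y\<close>.  Since the coefficients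
  of \<open>f\<close> lie in \<open>K\<close>, \<open>f\<close> maps \<open>K\<close> into \<open>K\<close>; as \<open>(x\<^sub>1, y\<^sub>1) \<sim> (x\<^sub>2, y\<^sub>2)\<close> means \<open>y\<^sub>1 + y\<^sub>2 = f (x\<^sub>1 + x\<^sub>2)\<close>,
  the \<open>q (q\<^sup>2 - q)/2\<close> affine points of \<open>K \<times> Y\<close> are pairwise non-adjacent.
\<close>

lemma finite_field_power_card:
  fixes x :: "'a::{field,finite}"
  shows "x ^ card (UNIV :: 'a set) = x"
proof (cases "x = 0")
  case False
  let ?U = "UNIV - {0::'a}"
  have "(\<Prod>y\<in>?U. x * y) = \<Prod>?U"
    by (rule prod.reindex_bij_witness[of _ "\<lambda>y. y / x" "\<lambda>y. x * y"]) (use False in auto)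
  then have "x ^ (card (UNIV :: 'a set) - 1) = 1"
    by (simp add: prod.distrib)
  then show ?thesis
    using power_minus_mult[of "card (UNIV :: 'a set)" x] finite_UNIV_card_ge_0[where 'a = 'a]
    by simp
qed (simp add: finite_UNIV_card_ge_0)

lemma of_nat_card_UNIV_eq_0: "of_nat (card (UNIV :: 'a::{ring_1,finite} set)) = (0 :: 'a)"
proof -
  have "(\<Sum>x\<in>(UNIV :: 'a set). x + 1) = (\<Sum>x\<in>UNIV. x)"
    by (rule sum.reindex_bij_witness[of _ "\<lambda>y. y - 1" "\<lambda>y. y + 1"]) auto
  then show ?thesis
    by (simp add: sum.distrib)
qed

lemma CHAR_eq_if_card_eq_prime_power:
  assumes "prime p" and "card (UNIV :: 'a::{field,finite} set) = p ^ n"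
  shows "CHAR('a) = p"
proof -
  have char: "prime CHAR('a)"
    by (intro prime_CHAR_semidom finite_imp_CHAR_pos) simp
  have "CHAR('a) dvd p ^ n"
    using of_nat_card_UNIV_eq_0[where 'a = 'a, unfolded assms(2) of_nat_eq_0_iff_char_dvd] .
  then have "CHAR('a) dvd p"
    by (rule prime_dvd_power[OF char])
  then show ?thesis
    by (rule primes_dvd_imp_eq[OF char assms(1)])
qed

lemma add_self_eq_0_imp_eq_0_if_odd_CHAR:
  fixes z :: "'a::idom"
  assumes "odd CHAR('a)" and "z + z = 0"
  shows "z = 0"
proof -
  have "of_nat 2 \<noteq> (0 :: 'a)"
  proof
    assume "of_nat 2 = (0 :: 'a)"
    then have "CHAR('a) dvd 2"
      by (simp only: of_nat_eq_0_iff_char_dvd)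
    then have "CHAR('a) \<le> 2"
      by (rule dvd_imp_le) simp
    then show False
      using assms(1) CHAR_not_1'[where 'a = 'a] by presburger
  qed
  then show ?thesis
    using assms(2) by (simp flip: mult_2)
qed

lemma additive_power_CHAR_power:
  assumes "prime CHAR('a::comm_ring_1)" and "q = CHAR('a) ^ k"
  shows "additive (\<lambda>x::'a. x ^ q)"
  by unfold_locales (rule freshmans_dream'[OF assms])

lemma additive_power_CHAR_power_minus_id:
  assumes "prime CHAR('a::comm_ring_1)" and "q = CHAR('a) ^ k"
  shows "additive (\<lambda>x::'a. x ^ q - x)"
  by unfold_locales (simp add: freshmans_dream'[OF assms])

lemma poly_power_CHAR_power:
  fixes f :: "'a::comm_ring_1 poly"
  assumes "prime CHAR('a)" and "q = CHAR('a) ^ k" and "\<And>i. coeff f i ^ q = coeff f i"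
  shows "poly f x ^ q = poly f (x ^ q)"
proof -
  have "poly f x ^ q = (\<Sum>i\<le>degree f. (coeff f i * x ^ i) ^ q)"
    by (simp add: poly_altdef freshmans_dream_sum'[OF assms(1,2)])
  also have "\<dots> = (\<Sum>i\<le>degree f. coeff f i * (x ^ q) ^ i)"
    by (intro sum.cong refl) (simp add: power_mult_distrib assms(3) power_mult[symmetric] mult.commute)
  finally show ?thesis
    by (simp add: poly_altdef)
qed

lemma card_power_eq_mult_le:
  fixes c :: "'a::idom"
  assumes "q \<ge> 2"
  shows "card {x. x ^ q = c * x} \<le> q"
proof -
  define P where "P = monom 1 q + [:0, - c:]"
  have deg: "degree P = q"
    unfolding P_def using assms by (subst degree_add_eq_left) (auto simp: degree_monom_eq)
  then have "P \<noteq> 0"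
    using assms by auto
  have "{x. x ^ q = c * x} = {x. poly P x = 0}"
    by (simp add: P_def poly_monom mult.commute)
  also have "card \<dots> \<le> q"
    using card_poly_roots_bound[OF \<open>P \<noteq> 0\<close>] deg by simp
  finally show ?thesis .
qed

lemma (in additive) card_UNIV_eq_card_range_mult_card_kernel:
  assumes "finite (UNIV :: 'a set)"
  shows "card (UNIV :: 'a set) = card (range f) * card (f -` {0})"
proof -
  have fiber: "f -` {f y} = (+) y ` (f -` {0})" for y
  proof (intro set_eqI iffI)
    fix z assume "z \<in> f -` {f y}"
    then show "z \<in> (+) y ` (f -` {0})"
      by (intro image_eqI[of _ _ "z - y"]) (auto simp: diff)
  qed (auto simp: add)
  have "card (UNIV :: 'a set) = card (\<Union>z\<in>range f. f -` {z})"
    by (intro arg_cong[where f = card]) blast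
  also have "\<dots> = (\<Sum>z\<in>range f. card (f -` {z}))"
    by (intro card_UN_disjoint) (auto intro: rev_finite_subset[OF assms])
  also have "\<dots> = (\<Sum>z\<in>range f. card (f -` {0}))"
    using fiber by (intro sum.cong) (auto simp: card_image)
  finally show ?thesis
    by simp
qed

lemma (in additive) obtain_half_with_nonzero_image_sums:
  assumes "finite (UNIV :: 'a set)" and no_2_torsion: "\<And>z :: 'b. z + z = 0 \<Longrightarrow> z = 0"
  obtains Y where "\<And>y1 y2. y1 \<in> Y \<Longrightarrow> y2 \<in> Y \<Longrightarrow> f y1 + f y2 \<noteq> 0"
    and "2 * card Y = card (UNIV :: 'a set) - card (f -` {0})"
proof -
  obtain e :: "'b \<Rightarrow> nat" where e: "inj_on e (range f)"
    using finite_imp_inj_to_nat_seg[of "range f"] assms(1) by auto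
  define Y where "Y = {y. e (f y) < e (- f y)}"
  have sums: "f y1 + f y2 \<noteq> 0" if "y1 \<in> Y" "y2 \<in> Y" for y1 y2
  proof
    assume "f y1 + f y2 = 0"
    then have "f y2 = - f y1"
      by (simp only: add_eq_0_iff)
    then show False
      using that unfolding Y_def by simp
  qed
  have split: "UNIV - f -` {0} = Y \<union> uminus ` Y"
  proof (intro set_eqI iffI)
    fix y assume "y \<in> UNIV - f -` {0}"
    then have "f y + f y \<noteq> 0"
      using no_2_torsion[of "f y"] by blast
    then have "f y \<noteq> f (- y)"
      by (simp add: minus eq_neg_iff_add_eq_0)
    then have "e (f y) \<noteq> e (f (- y))"
      using inj_onD[OF e] by blast
    then have "y \<in> Y \<or> - y \<in> Y"
      unfolding Y_def by (auto simp: minus)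
    then show "y \<in> Y \<union> uminus ` Y"
      by (auto intro: image_eqI[of _ _ "- y"])
  qed (auto simp: Y_def minus)
  have "Y \<inter> uminus ` Y = {}"
    by (auto simp: Y_def minus)
  moreover have "finite Y"
    using finite_subset[OF subset_UNIV assms(1)] .
  ultimately have "card (UNIV - f -` {0}) = 2 * card Y"
    unfolding split by (simp add: card_Un_disjoint card_image)
  moreover have "finite (f -` {0})"
    using finite_subset[OF subset_UNIV assms(1)] .
  ultimately have "2 * card Y = card (UNIV :: 'a set) - card (f -` {0})"
    by (simp add: card_Diff_subset)
  with sums show ?thesis
    by (rule that)
qed

text \<open>The kernel of \<open>\<psi> y = y\<^sup>q - y\<close> is \<open>{x. x\<^sup>q = x}\<close> and its image lies among the roots of
  \<open>X\<^sup>q + X\<close>; both have at most \<open>q\<close> elements and their sizes multiply to \<open>q\<^sup>2\<close>.\<close>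

lemma card_fixed_points_power:
  assumes "card (UNIV :: 'a::{field,finite} set) = q ^ 2" and "q = CHAR('a) ^ k" and "k > 0"
  shows "card {x::'a. x ^ q = x} = q"
proof -
  have char: "prime CHAR('a)"
    by (intro prime_CHAR_semidom finite_imp_CHAR_pos) simp
  then have "2 \<le> CHAR('a)"
    by (rule prime_ge_2_nat)
  also have "CHAR('a) \<le> q"
    using assms(2,3) \<open>2 \<le> CHAR('a)\<close> by (simp add: self_le_power)
  finally have "q \<ge> 2" .
  interpret frob: additive "\<lambda>x::'a. x ^ q"
    by (rule additive_power_CHAR_power[OF char assms(2)])
  define \<psi> :: "'a \<Rightarrow> 'a" where "\<psi> y = y ^ q - y" for y
  interpret \<psi>: additive \<psi>
    unfolding \<psi>_def by (rule additive_power_CHAR_power_minus_id[OF char assms(2)])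
  have "\<psi> y ^ q = (- 1) * \<psi> y" for y
  proof -
    have "y ^ (q * q) = y"
      using finite_field_power_card[of y] assms(1) by (simp add: power2_eq_square)
    have "\<psi> y ^ q = (y ^ q) ^ q - y ^ q"
      unfolding \<psi>_def by (rule frob.diff)
    also have "\<dots> = y - y ^ q"
      using \<open>y ^ (q * q) = y\<close> by (simp flip: power_mult)
    finally show ?thesis
      by (simp add: \<psi>_def)
  qed
  then have "card (range \<psi>) \<le> card {z::'a. z ^ q = (- 1) * z}"
    by (intro card_mono) auto
  also have "\<dots> \<le> q"
    by (rule card_power_eq_mult_le[OF \<open>q \<ge> 2\<close>])
  finally have image: "card (range \<psi>) \<le> q" .
  have kernel: "\<psi> -` {0} = {x. x ^ q = x}"
    by (auto simp: \<psi>_def)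
  have "card {x::'a. x ^ q = x} \<le> q"
    using card_power_eq_mult_le[OF \<open>q \<ge> 2\<close>, of "1 :: 'a"] by simp
  moreover have "q * q = card (range \<psi>) * card {x::'a. x ^ q = x}"
    using \<psi>.card_UNIV_eq_card_range_mult_card_kernel[OF finite_UNIV] assms(1) kernel
    by (simp add: power2_eq_square)
  then have "q * q \<le> q * card {x::'a. x ^ q = x}"
    using image by simp
  ultimately show ?thesis
    using \<open>q \<ge> 2\<close> by simp
qed

lemma finite_UNIV_pt: "finite (UNIV :: 'a::finite pt set)"
proof -
  have UNIV_eq: "(UNIV :: 'a pt set) = case_prod Aff ` UNIV \<union> range Dir \<union> {PInf}"
  proof (intro set_eqI iffI)
    fix z :: "'a pt"
    show "z \<in> case_prod Aff ` UNIV \<union> range Dir \<union> {PInf}"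
      by (cases z) auto
  qed auto
  then show ?thesis
    unfolding UNIV_eq by simp
qed

lemma card_le_independence_number:
  assumes "indep_set f (S :: 'a::{field,finite} pt set)"
  shows "card S \<le> independence_number f"
  unfolding independence_number_def
proof (rule Max_ge)
  have "{card S |S. indep_set f S} \<subseteq> card ` Pow (UNIV :: 'a pt set)"
    by auto
  then show "finite {card S |S. indep_set f S}"
    using finite_UNIV_pt by (rule finite_subset[OF _ finite_imageI[OF finite_Pow_iff[THEN iffD2]]])
qed (use assms in auto)

lemma indep_set_Aff_product:
  assumes "\<And>x1 x2 y1 y2. x1 \<in> X \<Longrightarrow> x2 \<in> X \<Longrightarrow> y1 \<in> Y \<Longrightarrow> y2 \<in> Y \<Longrightarrow>
    y1 + y2 \<noteq> poly f (x1 + x2)"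
  shows "indep_set f (case_prod Aff ` (X \<times> Y))"
  unfolding indep_set_def
proof (intro ballI notI)
  fix p1 p2
  assume p1: "p1 \<in> case_prod Aff ` (X \<times> Y)" and p2: "p2 \<in> case_prod Aff ` (X \<times> Y)"
    and adj: "adj f p1 p2"
  obtain x1 y1 where p1_eq: "p1 = Aff x1 y1" and "x1 \<in> X" "y1 \<in> Y"
    using p1 by auto
  obtain x2 y2 where p2_eq: "p2 = Aff x2 y2" and "x2 \<in> X" "y2 \<in> Y"
    using p2 by auto
  have "y1 + y2 = poly f (x1 + x2)"
    using adj unfolding p1_eq p2_eq by (simp add: adj_def eq_diff_eq)
  then show False
    using assms \<open>x1 \<in> X\<close> \<open>y1 \<in> Y\<close> \<open>x2 \<in> X\<close> \<open>y2 \<in> Y\<close> by blast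
qed

lemma independence_number_ge_fixed_points:
  fixes f :: "'a::{field,finite} poly"
  assumes "odd CHAR('a)" and q: "q = CHAR('a) ^ k" and coeff_fixed: "\<And>i. coeff f i ^ q = coeff f i"
  defines "K \<equiv> {x::'a. x ^ q = x}"
  shows "card K * (card (UNIV :: 'a set) - card K) \<le> 2 * independence_number f"
proof -
  have prime_char: "prime CHAR('a)"
    by (intro prime_CHAR_semidom finite_imp_CHAR_pos) simp
  interpret frob: additive "\<lambda>x::'a. x ^ q"
    by (rule additive_power_CHAR_power[OF prime_char q])
  define \<psi> :: "'a \<Rightarrow> 'a" where "\<psi> y = y ^ q - y" for y
  interpret \<psi>: additive \<psi>
    unfolding \<psi>_def by (rule additive_power_CHAR_power_minus_id[OF prime_char q])
  obtain Y where sums: "\<And>y1 y2. y1 \<in> Y \<Longrightarrow> y2 \<in> Y \<Longrightarrow> \<psi> y1 + \<psi> y2 \<noteq> 0"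
    and card_Y: "2 * card Y = card (UNIV :: 'a set) - card (\<psi> -` {0})"
    using \<psi>.obtain_half_with_nonzero_image_sums[OF finite_UNIV
        add_self_eq_0_imp_eq_0_if_odd_CHAR[OF assms(1)]]
    by blast
  have kernel: "\<psi> -` {0} = K"
    by (auto simp: K_def \<psi>_def)
  have f_K: "poly f (x1 + x2) \<in> K" if "x1 \<in> K" "x2 \<in> K" for x1 x2
    using that poly_power_CHAR_power[OF prime_char q coeff_fixed] by (simp add: K_def frob.add)
  have "indep_set f (case_prod Aff ` (K \<times> Y))"
  proof (rule indep_set_Aff_product)
    fix x1 x2 y1 y2 assume "x1 \<in> K" "x2 \<in> K" "y1 \<in> Y" "y2 \<in> Y"
    show "y1 + y2 \<noteq> poly f (x1 + x2)"
    proof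
      assume "y1 + y2 = poly f (x1 + x2)"
      then have "\<psi> (y1 + y2) = 0"
        using f_K[OF \<open>x1 \<in> K\<close> \<open>x2 \<in> K\<close>] by (simp add: K_def \<psi>_def)
      then show False
        using sums[OF \<open>y1 \<in> Y\<close> \<open>y2 \<in> Y\<close>] by (simp add: \<psi>.add)
    qed
  qed
  then have "card (case_prod Aff ` (K \<times> Y)) \<le> independence_number f"
    by (rule card_le_independence_number)
  moreover have "card (case_prod Aff ` (K \<times> Y)) = card K * card Y"
    by (simp add: card_image inj_on_def card_cartesian_product)
  ultimately show ?thesis
    using card_Y kernel by (metis mult.left_commute mult_le_mono2)
qed

theorem theorem1:
  fixes f :: "'a::{field,finite} poly" and q p k :: nat
  assumes "prime p" and "odd p" and "k > 0" and "q = p ^ k"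
    and "card (UNIV :: 'a set) = q ^ 2"
    and "planar f"
    and "\<forall>i. coeff f i ^ q = coeff f i"
  shows "real (independence_number f) \<ge> 1/2 * real q ^ 2 * (real q - 1)"
proof -
  have char: "CHAR('a) = p"
    using CHAR_eq_if_card_eq_prime_power[OF assms(1), of "k * 2"] assms(4,5)
    by (simp add: power_mult)
  then have "odd CHAR('a)" and q: "q = CHAR('a) ^ k"
    using assms(2,4) by simp_all
  have "card {x::'a. x ^ q = x} = q"
    by (rule card_fixed_points_power[OF assms(5) q assms(3)])
  then have "q * (q ^ 2 - q) \<le> 2 * independence_number f"
    using independence_number_ge_fixed_points[OF \<open>odd CHAR('a)\<close> q] assms(5,7) by simp
  then have "real (q * (q ^ 2 - q)) \<le> real (2 * independence_number f)"
    by (simp only: of_nat_le_iff)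
  then have "real q * (real q ^ 2 - real q) \<le> 2 * real (independence_number f)"
    using le_square[of q] by (simp add: of_nat_diff power2_eq_square)
  then show ?thesis
    by (simp add: power2_eq_square algebra_simps)
qed

end
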